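(* Let $\gamma_1,\gamma_2\in[0,1)$, $\beta\ge0$, let $q_1^\star$ be the unique solution of $b_1(q_1)=0$ and $q_2^\star$ the unique solution of $b_2(q_1^\star,q_2)=0$, and let $\pi_2^\star$ be the policy induced by $q_2^\star$. Suppose $l_1^\star,l_2^\star:\mathcal S\times\mathcal A\to\mathbb R$ with $l_2^\star\ge0$ satisfy, for all functions $h$ on $\mathcal S\times\mathcal A$, $$\langle l_2^\star,(I-\gamma_2P_2^{\pi_2^\star})h\rangle_{\rho_2}=\langle q_2^\star,h\rangle_{\rho_2},\qquad \langle l_1^\star,(I-\gamma_1P_1^\mu)h\rangle_{\rho_1}=\beta\langle q_1^\star,h\rangle_{\rho_1}+\langle l_2^\star,(I-\Pi_\mu)h\rangle_{\rho_2}.$$ Then $(q_1^\star,q_2^\star,l_1^\star,l_2^\star)$ is a saddle point of $\mathcal L^\beta_{\rm coup}$, i.e. $\mathcal L^\beta_{\rm coup}(q_1^\star,q_2^\star,l_1,l_2)\le \mathcal L^\beta_{\rm coup}(q_1^\star,q_2^\star,l_1^\star,l_2^\star)\le\mathcal L^\beta_{\rm coup}(q_1,q_2,l_1^\star,l_2^\star)$ for all $q_1,q_2,l_1,l_2$, and for every $(q_1,q_2)$, $$\mathcal L^\beta_{\rm coup}(q_1,q_2,l_1^\star,l_2^\star)-\mathcal L^\beta_{\rm coup}(q_1^\star,q_2^\star,l_1^\star,l_2^\star)\ge\frac\beta2\|q_1-q_1^\star\|_{\rho_1}^2+\frac12\|q_2-q_2^\star\|_{\rho_2}^2.$$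
   Context: Setup: $\mathcal S$ and $\mathcal A$ are finite sets; functions on $\mathcal S\times\mathcal A$ are real vectors. For a probability distribution $\rho$ on $\mathcal S\times\mathcal A$, $\langle f,h\rangle_\rho=\sum_{s,a}\rho(s,a)f(s,a)h(s,a)$, $\|f\|_\rho^2=\langle f,f\rangle_\rho$; $\rho_1,\rho_2$ are probability distributions on $\mathcal S\times\mathcal A$. $P_1,P_2$ are transition kernels. $\mu$ is an anchor policy, $g:\mathcal S\to\mathbb R$, $C\in\mathbb R$, $u_g^\star$ a given function on $\mathcal S\times\mathcal A$. $(\Pi_\mu q)(s,a):=\sum_{a'}\mu(a'\mid s)q(s,a')$; $(P_1^\mu q)(s,a):=\sum_{s'}P_1(s'\mid s,a)\sum_{a'}\mu(a'\mid s')q(s',a')$; for $v:\mathcal S\to\mathbb R$, $(P_2v)(s,a):=\sum_{s'}P_2(s'\mid s,a)v(s')$; for a policy $\pi$, $(P_2^\pi h)(s,a):=\sum_{s'}P_2(s'\mid s,a)\sum_{a'}\pi(a'\mid s')h(s',a')$. With $\tau_2>0$ and full-support $\pi_{2,\rm ref}$, $\Omega(q)(s):=\tau_2\log\sum_a\pi_{2,\rm ref}(a\mid s)e^{q(s,a)/\tau_2}$, and the policy induced by $q$ is $\pi_q(a\mid s)=\pi_{2,\rm ref}(a\mid s)e^{q(s,a)/\tau_2}/\sum_{a'}\pi_{2,\rm ref}(a'\mid s)e^{q(s,a')/\tau_2}$. Residuals $b_1(q_1):=u_g^\star+\gamma_1P_1^\mu q_1-q_1$, $b_2(q_1,q_2):=(I-\Pi_\mu)q_1+g+C+\gamma_2P_2\Omega(q_2)-q_2$.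 Coupled Lagrangian: $\mathcal L^\beta_{\rm coup}(q_1,q_2,l_1,l_2):=\frac\beta2\|q_1\|_{\rho_1}^2+\frac12\|q_2\|_{\rho_2}^2+\langle l_1,b_1(q_1)\rangle_{\rho_1}+\langle l_2,b_2(q_1,q_2)\rangle_{\rho_2}$. *)

theory Defs
  imports Complex_Main
begin

definition ip :: "('s::finite \<Rightarrow> 'a::finite \<Rightarrow> real) \<Rightarrow> ('s \<Rightarrow> 'a \<Rightarrow> real) \<Rightarrow> ('s \<Rightarrow> 'a \<Rightarrow> real) \<Rightarrow> real" where
  "ip \<rho> f h = (\<Sum>s\<in>UNIV. \<Sum>a\<in>UNIV. \<rho> s a * f s a * h s a)"

definition normsq :: "('s::finite \<Rightarrow> 'a::finite \<Rightarrow> real) \<Rightarrow> ('s \<Rightarrow> 'a \<Rightarrow> real) \<Rightarrow> real" where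
  "normsq \<rho> f = ip \<rho> f f"

definition is_dist :: "('s::finite \<Rightarrow> 'a::finite \<Rightarrow> real) \<Rightarrow> bool" where
  "is_dist \<rho> \<longleftrightarrow> (\<forall>s a. 0 \<le> \<rho> s a) \<and> (\<Sum>s\<in>UNIV. \<Sum>a\<in>UNIV. \<rho> s a) = 1"

definition is_kernel :: "('s::finite \<Rightarrow> 'a::finite \<Rightarrow> 's \<Rightarrow> real) \<Rightarrow> bool" where
  "is_kernel P \<longleftrightarrow> (\<forall>s a s'. 0 \<le> P s a s') \<and> (\<forall>s a. (\<Sum>s'\<in>UNIV. P s a s') = 1)"

definition is_policy :: "('s::finite \<Rightarrow> 'a::finite \<Rightarrow> real) \<Rightarrow> bool" where
  "is_policy \<pi> \<longleftrightarrow> (\<forall>s a. 0 \<le> \<pi> s a) \<and> (\<forall>s. (\<Sum>a\<in>UNIV. \<pi> s a) = 1)"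

text \<open>(Pi_mu q)(s,a) = sum_a' mu(a'|s) q(s,a'); here mu s a' = mu(a'|s).\<close>
definition Pi_pol :: "('s::finite \<Rightarrow> 'a::finite \<Rightarrow> real) \<Rightarrow> ('s \<Rightarrow> 'a \<Rightarrow> real) \<Rightarrow> 's \<Rightarrow> 'a \<Rightarrow> real" where
  "Pi_pol \<mu> q s a = (\<Sum>a'\<in>UNIV. \<mu> s a' * q s a')"

text \<open>(P^pi q)(s,a) = sum_s' P(s'|s,a) sum_a' pi(a'|s') q(s',a'); P s a s' = P(s'|s,a).\<close>
definition P_pol :: "('s::finite \<Rightarrow> 'a::finite \<Rightarrow> 's \<Rightarrow> real) \<Rightarrow> ('s \<Rightarrow> 'a \<Rightarrow> real) \<Rightarrow> ('s \<Rightarrow> 'a \<Rightarrow> real) \<Rightarrow> 's \<Rightarrow> 'a \<Rightarrow> real" where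
  "P_pol P \<pi> q s a = (\<Sum>s'\<in>UNIV. P s a s' * (\<Sum>a'\<in>UNIV. \<pi> s' a' * q s' a'))"

definition P_val :: "('s::finite \<Rightarrow> 'a::finite \<Rightarrow> 's \<Rightarrow> real) \<Rightarrow> ('s \<Rightarrow> real) \<Rightarrow> 's \<Rightarrow> 'a \<Rightarrow> real" where
  "P_val P v s a = (\<Sum>s'\<in>UNIV. P s a s' * v s')"

definition Omega :: "real \<Rightarrow> ('s::finite \<Rightarrow> 'a::finite \<Rightarrow> real) \<Rightarrow> ('s \<Rightarrow> 'a \<Rightarrow> real) \<Rightarrow> 's \<Rightarrow> real" where
  "Omega \<tau> piref q s = \<tau> * ln (\<Sum>a\<in>UNIV. piref s a * exp (q s a / \<tau>))"

definition pol_of :: "real \<Rightarrow> ('s::finite \<Rightarrow> 'a::finite \<Rightarrow> real) \<Rightarrow> ('s \<Rightarrow> 'a \<Rightarrow> real) \<Rightarrow> 's \<Rightarrow> 'a \<Rightarrow> real" where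
  "pol_of \<tau> piref q s a = piref s a * exp (q s a / \<tau>) / (\<Sum>a'\<in>UNIV. piref s a' * exp (q s a' / \<tau>))"

definition b1 :: "('s::finite \<Rightarrow> 'a::finite \<Rightarrow> real) \<Rightarrow> real \<Rightarrow> ('s \<Rightarrow> 'a \<Rightarrow> 's \<Rightarrow> real) \<Rightarrow> ('s \<Rightarrow> 'a \<Rightarrow> real) \<Rightarrow> ('s \<Rightarrow> 'a \<Rightarrow> real) \<Rightarrow> 's \<Rightarrow> 'a \<Rightarrow> real" where
  "b1 ug \<gamma>1 P1 \<mu> q1 s a = ug s a + \<gamma>1 * P_pol P1 \<mu> q1 s a - q1 s a"

definition b2 :: "('s::finite \<Rightarrow> 'a::finite \<Rightarrow> real) \<Rightarrow> ('s \<Rightarrow> real) \<Rightarrow> real \<Rightarrow> real \<Rightarrow> ('s \<Rightarrow> 'a \<Rightarrow> 's \<Rightarrow> real) \<Rightarrow> real \<Rightarrow> ('s \<Rightarrow> 'a \<Rightarrow> real)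
     \<Rightarrow> ('s \<Rightarrow> 'a \<Rightarrow> real) \<Rightarrow> ('s \<Rightarrow> 'a \<Rightarrow> real) \<Rightarrow> 's \<Rightarrow> 'a \<Rightarrow> real" where
  "b2 \<mu> g C \<gamma>2 P2 \<tau> piref q1 q2 s a =
     q1 s a - Pi_pol \<mu> q1 s a + g s + C + \<gamma>2 * P_val P2 (Omega \<tau> piref q2) s a - q2 s a"

definition Lcoup :: "real \<Rightarrow> ('s::finite \<Rightarrow> 'a::finite \<Rightarrow> real) \<Rightarrow> ('s \<Rightarrow> 'a \<Rightarrow> real)
     \<Rightarrow> ('s \<Rightarrow> 'a \<Rightarrow> real) \<Rightarrow> real \<Rightarrow> ('s \<Rightarrow> 'a \<Rightarrow> 's \<Rightarrow> real) \<Rightarrow> ('s \<Rightarrow> 'a \<Rightarrow> real)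
     \<Rightarrow> ('s \<Rightarrow> real) \<Rightarrow> real \<Rightarrow> real \<Rightarrow> ('s \<Rightarrow> 'a \<Rightarrow> 's \<Rightarrow> real) \<Rightarrow> real \<Rightarrow> ('s \<Rightarrow> 'a \<Rightarrow> real)
     \<Rightarrow> ('s \<Rightarrow> 'a \<Rightarrow> real) \<Rightarrow> ('s \<Rightarrow> 'a \<Rightarrow> real) \<Rightarrow> ('s \<Rightarrow> 'a \<Rightarrow> real) \<Rightarrow> ('s \<Rightarrow> 'a \<Rightarrow> real) \<Rightarrow> real" where
  "Lcoup \<beta> \<rho>1 \<rho>2 ug \<gamma>1 P1 \<mu> g C \<gamma>2 P2 \<tau> piref q1 q2 l1 l2 =
     \<beta> / 2 * normsq \<rho>1 q1 + 1 / 2 * normsq \<rho>2 q2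
     + ip \<rho>1 l1 (b1 ug \<gamma>1 P1 \<mu> q1) + ip \<rho>2 l2 (b2 \<mu> g C \<gamma>2 P2 \<tau> piref q1 q2)"

end

theory Submission
  imports Defs "HOL-Analysis.Convex"
begin

text \<open>At the primal solution both constraints vanish, so there the Lagrangian does not depend on
the multipliers. Away from it, put \<open>d1 = q1 - q1s\<close> and \<open>d2 = q2 - q2s\<close>. The constraint \<open>b1\<close> is
affine, and \<open>b2\<close> is convex in \<open>q2\<close>: \<open>Omega\<close> is a log-sum-exp whose gradient is the softmax
policy \<open>pol_of\<close> (Jensen for \<open>exp\<close>), and \<open>P2\<close> is monotone. Hence pointwise
\<open>b2 q1 q2 \<ge> (I - Pi_mu) d1 - (I - \<gamma>2 P2^pi*) d2\<close>. Pairing with \<open>l2s \<ge> 0\<close>, the two stationarity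
conditions cancel every term linear in \<open>d1, d2\<close> against the linear part of the quadratic
objective, which leaves \<open>\<beta>/2 |d1|^2 + 1/2 |d2|^2\<close>.\<close>

lemma ip_diff: "ip \<rho> f (\<lambda>s a. h s a - k s a) = ip \<rho> f h - ip \<rho> f k"
  by (simp add: ip_def sum_subtractf algebra_simps)

lemma ip_minus: "ip \<rho> f (\<lambda>s a. - h s a) = - ip \<rho> f h"
  by (simp add: ip_def sum_negf)

lemma ip_mono:
  assumes "\<forall>s a. 0 \<le> \<rho> s a" and "\<forall>s a. 0 \<le> f s a" and "\<forall>s a. h s a \<le> k s a"
  shows "ip \<rho> f h \<le> ip \<rho> f k"
  unfolding ip_def using assms by (intro sum_mono mult_left_mono) simp_all

lemma normsq_nonneg: "\<forall>s a. 0 \<le> \<rho> s a \<Longrightarrow> 0 \<le> normsq \<rho> f"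
  unfolding normsq_def ip_def by (intro sum_nonneg) (simp add: mult.assoc)

lemma normsq_diff:
  "normsq \<rho> q - normsq \<rho> q' = 2 * ip \<rho> q' (\<lambda>s a. q s a - q' s a) + normsq \<rho> (\<lambda>s a. q s a - q' s a)"
proof -
  have "normsq \<rho> q - normsq \<rho> q' = (\<Sum>s\<in>UNIV. \<Sum>a\<in>UNIV. \<rho> s a * q s a * q s a - \<rho> s a * q' s a * q' s a)"
    by (simp add: normsq_def ip_def sum_subtractf)
  also have "\<dots> = (\<Sum>s\<in>UNIV. \<Sum>a\<in>UNIV. 2 * (\<rho> s a * q' s a * (q s a - q' s a))
                    + \<rho> s a * (q s a - q' s a) * (q s a - q' s a))"
    by (intro sum.cong refl) (simp add: algebra_simps)
  also have "\<dots> = 2 * ip \<rho> q' (\<lambda>s a. q s a - q' s a) + normsq \<rho> (\<lambda>s a. q s a - q' s a)"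
    by (simp add: normsq_def ip_def sum.distrib sum_distrib_left)
  finally show ?thesis .
qed

lemma Omega_ge_linearization:
  fixes q q' piref :: "'s::finite \<Rightarrow> 'a::finite \<Rightarrow> real"
  assumes piref_pos: "\<forall>a. 0 < piref s a" and tau: "0 < \<tau>"
  shows "Omega \<tau> piref q s - Omega \<tau> piref q' s
         \<ge> (\<Sum>a\<in>UNIV. pol_of \<tau> piref q' s a * (q s a - q' s a))"
proof -
  define Z where "Z r = (\<Sum>a\<in>UNIV. piref s a * exp (r s a / \<tau>))" for r :: "'s \<Rightarrow> 'a \<Rightarrow> real"
  define w where "w = pol_of \<tau> piref q' s"
  have Z_pos: "0 < Z r" for r
    unfolding Z_def using piref_pos by (intro sum_pos) auto
  have w_nonneg: "0 \<le> w a" for a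
    unfolding w_def pol_of_def Z_def[symmetric] using piref_pos Z_pos[of q'] by (simp add: less_imp_le)
  have w_sum: "(\<Sum>a\<in>UNIV. w a) = 1"
    unfolding w_def pol_of_def Z_def[symmetric] using Z_pos[of q']
    by (simp add: sum_divide_distrib[symmetric] Z_def)
  have "w a * exp ((q s a - q' s a) / \<tau>) = piref s a * exp (q s a / \<tau>) / Z q'" for a
    unfolding w_def pol_of_def Z_def[symmetric]
    by (simp add: mult.assoc diff_divide_distrib flip: exp_add)
  then have ratio: "Z q / Z q' = (\<Sum>a\<in>UNIV. w a * exp ((q s a - q' s a) / \<tau>))"
    by (simp add: Z_def sum_divide_distrib)
  have "exp (\<Sum>a\<in>UNIV. w a * ((q s a - q' s a) / \<tau>)) \<le> Z q / Z q'"
    unfolding ratio using convex_on_sum[OF _ _ exp_convex w_sum, of "\<lambda>a. (q s a - q' s a) / \<tau>"] w_nonneg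
    by simp
  then have "(\<Sum>a\<in>UNIV. w a * (q s a - q' s a)) / \<tau> \<le> ln (Z q / Z q')"
    using Z_pos[of q] Z_pos[of q'] by (subst ln_ge_iff) (auto simp: sum_divide_distrib)
  also have "\<dots> = ln (Z q) - ln (Z q')"
    using Z_pos[of q] Z_pos[of q'] by (simp add: ln_div)
  finally have "(\<Sum>a\<in>UNIV. w a * (q s a - q' s a)) / \<tau> \<le> ln (Z q) - ln (Z q')" .
  then show ?thesis
    using tau unfolding Omega_def Z_def[symmetric] w_def
    by (simp add: pos_divide_le_eq right_diff_distrib mult.commute)
qed

lemma P_val_Omega_diff_ge:
  fixes q q' piref :: "'s::finite \<Rightarrow> 'a::finite \<Rightarrow> real"
  assumes "\<forall>s a s'. 0 \<le> P s a s'" and "\<forall>s a. 0 < piref s a" and "0 < \<tau>"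
  shows "P_val P (Omega \<tau> piref q) s a - P_val P (Omega \<tau> piref q') s a
         \<ge> P_pol P (pol_of \<tau> piref q') (\<lambda>s a. q s a - q' s a) s a"
  unfolding P_val_def P_pol_def sum_subtractf[symmetric] right_diff_distrib[symmetric]
  using assms Omega_ge_linearization[of piref _ \<tau> q' q] by (intro sum_mono mult_left_mono) simp_all

lemma b1_diff:
  "b1 ug \<gamma> P \<mu> q s a - b1 ug \<gamma> P \<mu> q' s a
   = - ((q s a - q' s a) - \<gamma> * P_pol P \<mu> (\<lambda>s a. q s a - q' s a) s a)"
  by (simp add: b1_def P_pol_def sum_subtractf right_diff_distrib algebra_simps)

lemma b2_diff_ge:
  fixes q1 q2 q1' q2' piref :: "'s::finite \<Rightarrow> 'a::finite \<Rightarrow> real"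
  assumes "\<forall>s a s'. 0 \<le> P s a s'" and "\<forall>s a. 0 < piref s a" and "0 < \<tau>" and "0 \<le> \<gamma>"
  shows "b2 \<mu> g C \<gamma> P \<tau> piref q1 q2 s a - b2 \<mu> g C \<gamma> P \<tau> piref q1' q2' s a
         \<ge> ((q1 s a - q1' s a) - Pi_pol \<mu> (\<lambda>s a. q1 s a - q1' s a) s a)
           - ((q2 s a - q2' s a) - \<gamma> * P_pol P (pol_of \<tau> piref q2') (\<lambda>s a. q2 s a - q2' s a) s a)"
proof -
  have "Pi_pol \<mu> q1 s a - Pi_pol \<mu> q1' s a = Pi_pol \<mu> (\<lambda>s a. q1 s a - q1' s a) s a"
    by (simp add: Pi_pol_def sum_subtractf right_diff_distrib)
  moreover have "\<gamma> * P_pol P (pol_of \<tau> piref q2') (\<lambda>s a. q2 s a - q2' s a) s a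
      \<le> \<gamma> * (P_val P (Omega \<tau> piref q2) s a - P_val P (Omega \<tau> piref q2') s a)"
    using assms P_val_Omega_diff_ge by (intro mult_left_mono) auto
  ultimately show ?thesis
    by (simp add: b2_def algebra_simps)
qed

lemma Lcoup_feasible:
  assumes "b1 ug \<gamma>1 P1 \<mu> q1 = (\<lambda>s a. 0)" and "b2 \<mu> g C \<gamma>2 P2 \<tau> piref q1 q2 = (\<lambda>s a. 0)"
  shows "Lcoup \<beta> \<rho>1 \<rho>2 ug \<gamma>1 P1 \<mu> g C \<gamma>2 P2 \<tau> piref q1 q2 l1 l2
         = \<beta> / 2 * normsq \<rho>1 q1 + 1 / 2 * normsq \<rho>2 q2"
  using assms by (simp add: Lcoup_def ip_def)

lemma Lcoup_growth:
  fixes \<rho>1 \<rho>2 \<mu> piref ug q1s q2s l1s l2s q1 q2 :: "'s::finite \<Rightarrow> 'a::finite \<Rightarrow> real"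
    and P1 P2 :: "'s \<Rightarrow> 'a \<Rightarrow> 's \<Rightarrow> real"
    and g :: "'s \<Rightarrow> real"
    and C \<gamma>1 \<gamma>2 \<beta> \<tau> :: real
  defines "L \<equiv> Lcoup \<beta> \<rho>1 \<rho>2 ug \<gamma>1 P1 \<mu> g C \<gamma>2 P2 \<tau> piref"
  assumes rho2: "\<forall>s a. 0 \<le> \<rho>2 s a" and P2: "\<forall>s a s'. 0 \<le> P2 s a s'"
    and piref_pos: "\<forall>s a. 0 < piref s a" and tau: "0 < \<tau>" and g2: "0 \<le> \<gamma>2"
    and q1s_sol: "b1 ug \<gamma>1 P1 \<mu> q1s = (\<lambda>s a. 0)"
    and q2s_sol: "b2 \<mu> g C \<gamma>2 P2 \<tau> piref q1s q2s = (\<lambda>s a. 0)"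
    and l2s_nonneg: "\<forall>s a. 0 \<le> l2s s a"
    and stat2: "\<forall>h. ip \<rho>2 l2s (\<lambda>s a. h s a - \<gamma>2 * P_pol P2 (pol_of \<tau> piref q2s) h s a)
                    = ip \<rho>2 q2s h"
    and stat1: "\<forall>h. ip \<rho>1 l1s (\<lambda>s a. h s a - \<gamma>1 * P_pol P1 \<mu> h s a)
                    = \<beta> * ip \<rho>1 q1s h + ip \<rho>2 l2s (\<lambda>s a. h s a - Pi_pol \<mu> h s a)"
  shows "L q1 q2 l1s l2s - L q1s q2s l1s l2s
         \<ge> \<beta> / 2 * normsq \<rho>1 (\<lambda>s a. q1 s a - q1s s a)
           + 1 / 2 * normsq \<rho>2 (\<lambda>s a. q2 s a - q2s s a)"
proof -
  define d1 where "d1 = (\<lambda>s a. q1 s a - q1s s a)"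
  define d2 where "d2 = (\<lambda>s a. q2 s a - q2s s a)"
  have "b1 ug \<gamma>1 P1 \<mu> q1 = (\<lambda>s a. - (d1 s a - \<gamma>1 * P_pol P1 \<mu> d1 s a))"
    using q1s_sol b1_diff[where ug = ug and \<gamma> = \<gamma>1 and P = P1 and \<mu> = \<mu> and q = q1 and q' = q1s]
    unfolding d1_def by (simp add: fun_eq_iff)
  then have l1s_b1: "ip \<rho>1 l1s (b1 ug \<gamma>1 P1 \<mu> q1)
      = - (\<beta> * ip \<rho>1 q1s d1 + ip \<rho>2 l2s (\<lambda>s a. d1 s a - Pi_pol \<mu> d1 s a))"
    using stat1 by (simp only: ip_minus)
  have "\<forall>s a. (d1 s a - Pi_pol \<mu> d1 s a) - (d2 s a - \<gamma>2 * P_pol P2 (pol_of \<tau> piref q2s) d2 s a)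
      \<le> b2 \<mu> g C \<gamma>2 P2 \<tau> piref q1 q2 s a"
    using q2s_sol b2_diff_ge[where \<mu> = \<mu> and g = g and C = C
        and ?q1.0 = q1 and ?q2.0 = q2 and q1' = q1s and q2' = q2s, OF P2 piref_pos tau g2]
    unfolding d1_def d2_def by (simp add: fun_eq_iff)
  then have "ip \<rho>2 l2s (\<lambda>s a. (d1 s a - Pi_pol \<mu> d1 s a)
                               - (d2 s a - \<gamma>2 * P_pol P2 (pol_of \<tau> piref q2s) d2 s a))
      \<le> ip \<rho>2 l2s (b2 \<mu> g C \<gamma>2 P2 \<tau> piref q1 q2)"
    by (rule ip_mono[OF rho2 l2s_nonneg])
  then have l2s_b2: "ip \<rho>2 l2s (\<lambda>s a. d1 s a - Pi_pol \<mu> d1 s a) - ip \<rho>2 q2s d2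
      \<le> ip \<rho>2 l2s (b2 \<mu> g C \<gamma>2 P2 \<tau> piref q1 q2)"
    by (simp only: ip_diff[of \<rho>2 l2s "\<lambda>s a. d1 s a - Pi_pol \<mu> d1 s a"] stat2)
  have "L q1 q2 l1s l2s - L q1s q2s l1s l2s
      = \<beta> / 2 * (normsq \<rho>1 q1 - normsq \<rho>1 q1s) + 1 / 2 * (normsq \<rho>2 q2 - normsq \<rho>2 q2s)
        + ip \<rho>1 l1s (b1 ug \<gamma>1 P1 \<mu> q1) + ip \<rho>2 l2s (b2 \<mu> g C \<gamma>2 P2 \<tau> piref q1 q2)"
    unfolding L_def Lcoup_feasible[OF q1s_sol q2s_sol] by (simp add: Lcoup_def algebra_simps)
  also have "\<dots> \<ge> \<beta> / 2 * normsq \<rho>1 d1 + 1 / 2 * normsq \<rho>2 d2"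
    using l2s_b2 unfolding normsq_diff d1_def[symmetric] d2_def[symmetric] l1s_b1
    by (simp add: ring_distribs)
  finally show ?thesis
    unfolding d1_def d2_def .
qed

theorem theorem3p3:
  fixes \<rho>1 \<rho>2 \<mu> piref ug q1s q2s l1s l2s :: "'s::finite \<Rightarrow> 'a::finite \<Rightarrow> real"
    and P1 P2 :: "'s \<Rightarrow> 'a \<Rightarrow> 's \<Rightarrow> real"
    and g :: "'s \<Rightarrow> real"
    and C \<gamma>1 \<gamma>2 \<beta> \<tau> :: real
  defines "L \<equiv> Lcoup \<beta> \<rho>1 \<rho>2 ug \<gamma>1 P1 \<mu> g C \<gamma>2 P2 \<tau> piref"
  assumes rho1: "is_dist \<rho>1" and rho2: "is_dist \<rho>2"
    and P1: "is_kernel P1" and P2: "is_kernel P2"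
    and mu: "is_policy \<mu>"
    and piref: "is_policy piref" and piref_pos: "\<forall>s a. 0 < piref s a"
    and tau: "0 < \<tau>"
    and g1: "0 \<le> \<gamma>1" "\<gamma>1 < 1" and g2: "0 \<le> \<gamma>2" "\<gamma>2 < 1"
    and beta: "0 \<le> \<beta>"
    and q1s_sol: "b1 ug \<gamma>1 P1 \<mu> q1s = (\<lambda>s a. 0)"
    and q1s_uniq: "\<forall>q1. b1 ug \<gamma>1 P1 \<mu> q1 = (\<lambda>s a. 0) \<longrightarrow> q1 = q1s"
    and q2s_sol: "b2 \<mu> g C \<gamma>2 P2 \<tau> piref q1s q2s = (\<lambda>s a. 0)"
    and q2s_uniq: "\<forall>q2. b2 \<mu> g C \<gamma>2 P2 \<tau> piref q1s q2 = (\<lambda>s a. 0) \<longrightarrow> q2 = q2s"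
    and l2s_nonneg: "\<forall>s a. 0 \<le> l2s s a"
    and stat2: "\<forall>h. ip \<rho>2 l2s (\<lambda>s a. h s a - \<gamma>2 * P_pol P2 (pol_of \<tau> piref q2s) h s a)
                    = ip \<rho>2 q2s h"
    and stat1: "\<forall>h. ip \<rho>1 l1s (\<lambda>s a. h s a - \<gamma>1 * P_pol P1 \<mu> h s a)
                    = \<beta> * ip \<rho>1 q1s h + ip \<rho>2 l2s (\<lambda>s a. h s a - Pi_pol \<mu> h s a)"
  shows "(\<forall>q1 q2 l1 l2.
            L q1s q2s l1 l2 \<le> L q1s q2s l1s l2s \<and> L q1s q2s l1s l2s \<le> L q1 q2 l1s l2s)
       \<and> (\<forall>q1 q2. L q1 q2 l1s l2s - L q1s q2s l1s l2s
            \<ge> \<beta> / 2 * normsq \<rho>1 (\<lambda>s a. q1 s a - q1s s a)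
              + 1 / 2 * normsq \<rho>2 (\<lambda>s a. q2 s a - q2s s a))"
proof -
  have rho: "\<forall>s a. 0 \<le> \<rho>1 s a" "\<forall>s a. 0 \<le> \<rho>2 s a"
    using rho1 rho2 by (auto simp: is_dist_def)
  have P2_nonneg: "\<forall>s a s'. 0 \<le> P2 s a s'"
    using P2 by (simp add: is_kernel_def)
  note growth = Lcoup_growth[OF rho(2) P2_nonneg piref_pos tau g2(1) q1s_sol q2s_sol l2s_nonneg stat2 stat1,
      folded L_def]
  have gap_nonneg:
    "0 \<le> \<beta> / 2 * normsq \<rho>1 (\<lambda>s a. q1 s a - q1s s a) + 1 / 2 * normsq \<rho>2 (\<lambda>s a. q2 s a - q2s s a)"
    for q1 q2
    using normsq_nonneg[OF rho(1)] normsq_nonneg[OF rho(2)] beta by simp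
  have "L q1s q2s l1s l2s \<le> L q1 q2 l1s l2s" for q1 q2
    using gap_nonneg[of q1 q2] growth[of q1 q2] by linarith
  moreover have "L q1s q2s l1 l2 \<le> L q1s q2s l1s l2s" for l1 l2
    unfolding L_def by (simp add: Lcoup_feasible[OF q1s_sol q2s_sol])
  ultimately show ?thesis
    using growth by blast
qed

end
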